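(* With notation as in the context, there exist cellular 2-cocycles $\psi_0\in C^2(Z_0;\mathbf{Z})$ and $\psi_1\in C^2(Z_1;\mathbf{Z})$, each invariant under translations by the lattice $\Gamma=(2\mathbf{Z})^4\oplus\langle u\rangle$, such that $\langle\psi_i,[J]\rangle=\pm1$ for every jailcell $J\subset Z_i$ ($i=0,1$), and $\psi_1(\tau(c))=\psi_0(c)$ for every 2-cell $c$ of $Z_0$.
   Context: Give $\mathbf{R}^5$ the product cubical cell structure with integer vertices; $Z_0$ is its 2-skeleton (a cubical 2-complex whose 2-cells are unit squares), $u=e_1+\dots+e_5$, $\tau:\mathbf{R}^5\to\mathbf{R}^5$ is the translation $\tau(x)=x+u/2$, and $Z_1=\tau(Z_0)$ with the translated cell structure. A jailcell in $Z_0$ (resp. $Z_1$) is the boundary of a unit 3-cube of the cubical structure of $\mathbf{R}^5$ (resp. of its translate by $u/2$), regarded as an oriented cellular 2-cycle in $Z_0$ (resp. $Z_1$). *)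

theory Defs
  imports "HOL-Analysis.Analysis"
begin

text \<open>Points of R^5 are vectors of type real^5; coordinates are indexed by the
  numeral type 5 (elements 0,1,2,3,4, linearly ordered), so coordinate e_m of the
  paper is index m-1.\<close>

definition intpts :: "(real^5) set" where
  "intpts = {x. \<forall>m. x $ m \<in> \<int>}"

definition uvec :: "real^5" where
  "uvec = (\<chi> m. 1)"

definition tau :: "real^5 \<Rightarrow> real^5" where
  "tau x = x + (1/2) *\<^sub>R uvec"

definition Gamma :: "(real^5) set" where
  "Gamma = {g. \<exists>(a :: 5 \<Rightarrow> int) (n :: int). a 4 = 0 \<and>
               g = (\<chi> m. 2 * of_int (a m)) + of_int n *\<^sub>R uvec}"

text \<open>An oriented 2-cell (v,i,j), i<j, is the unit square
  v + [0,1] e_i + [0,1] e_j oriented by (e_i, e_j).  A cellular 2-cochain with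
  integer coefficients is a function on such cells.\<close>
type_synonym cell2 = "(real^5) \<times> 5 \<times> 5"

definition square :: "cell2 \<Rightarrow> (real^5) set" where
  "square c = (case c of (v,i,j) \<Rightarrow>
     ({v + s *\<^sub>R axis i 1 + t *\<^sub>R axis j 1 | s t. 0 \<le> s \<and> s \<le> 1 \<and> 0 \<le> t \<and> t \<le> 1}))"

definition cells0 :: "cell2 set" where
  "cells0 = {(v,i,j). v \<in> intpts \<and> i < j}"

definition tau_cell :: "cell2 \<Rightarrow> cell2" where
  "tau_cell c = (case c of (v,i,j) \<Rightarrow> (tau v, i, j))"

definition cells1 :: "cell2 set" where
  "cells1 = tau_cell ` cells0"

definition translate_cell :: "real^5 \<Rightarrow> cell2 \<Rightarrow> cell2" where
  "translate_cell g c = (case c of (v,i,j) \<Rightarrow> (v + g, i, j))"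

text \<open>A unit 3-cube (v,i,j,k), i<j<k; its boundary as an oriented cellular
  2-chain, listed as (coefficient, oriented 2-cell) pairs (standard cubical
  boundary).\<close>
type_synonym cube3 = "(real^5) \<times> 5 \<times> 5 \<times> 5"

definition cubes0 :: "cube3 set" where
  "cubes0 = {(v,i,j,k). v \<in> intpts \<and> i < j \<and> j < k}"

definition cubes1 :: "cube3 set" where
  "cubes1 = (\<lambda>(v,i,j,k). (tau v, i, j, k)) ` cubes0"

definition jailcell :: "cube3 \<Rightarrow> (int \<times> cell2) list" where
  "jailcell q = (case q of (v,i,j,k) \<Rightarrow>
     [( 1, (v + axis i 1, j, k)), (-1, (v, j, k)),
      (-1, (v + axis j 1, i, k)), ( 1, (v, i, k)),
      ( 1, (v + axis k 1, i, j)), (-1, (v, i, j))])"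

definition pairing :: "(cell2 \<Rightarrow> int) \<Rightarrow> (int \<times> cell2) list \<Rightarrow> int" where
  "pairing \<psi> z = sum_list (map (\<lambda>(s,c). s * \<psi> c) z)"

end

theory Submission imports Defs begin

text \<open>On a 2-cell at \<open>v\<close> spanned by
  \<open>e\<^sub>j, e\<^sub>k\<close> the cochain is either 0 or \<open>\<lfloor>v\<^sub>m - v\<^sub>4\<rfloor> mod 2\<close>, with the coordinate \<open>m\<close>
  depending only on the direction \<open>(j, k)\<close>. Pushing such a cell by \<open>e\<^sub>i\<close> changes this
  parity by \<open>\<plusminus>1\<close> when \<open>i \<in> {m, 4}\<close> and leaves it unchanged otherwise. The directions are
  labelled so that in every unit 3-cube exactly one of its three pairs of opposite faces
  sees such a change, hence every jailcell pairs to \<open>\<plusminus>1\<close>. Coordinate differences are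
  unchanged by \<open>\<tau>\<close> and change by even integers under \<open>\<Gamma>\<close>, which gives the invariances;
  one cochain serves for both \<open>Z\<^sub>0\<close> and \<open>Z\<^sub>1\<close>.\<close>

definition floor_parity :: "real \<Rightarrow> int" where
  "floor_parity x = \<lfloor>x\<rfloor> mod 2"

lemma floor_parity_cases: "floor_parity x = 0 \<or> floor_parity x = 1"
  unfolding floor_parity_def by auto

lemma floor_parity_add_one: "floor_parity (x + 1) = 1 - floor_parity x"
  unfolding floor_parity_def by (simp add: mod_simps) presburger

lemma floor_parity_diff_one: "floor_parity (x - 1) = 1 - floor_parity x"
  using floor_parity_add_one[of "x - 1"] by simp

lemma floor_parity_add_even: "floor_parity (x + 2 * of_int k) = floor_parity x"
proof -
  have "\<lfloor>x + 2 * of_int k\<rfloor> = \<lfloor>x\<rfloor> + 2 * k"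
    by (metis floor_add_int of_int_mult of_int_numeral)
  then show ?thesis
    unfolding floor_parity_def by simp
qed

definition rel_parity :: "real^5 \<Rightarrow> 5 \<Rightarrow> int" where
  "rel_parity v m = floor_parity (v $ m - v $ 4)"

lemma rel_parity_cases: "rel_parity v m = 0 \<or> rel_parity v m = 1"
  unfolding rel_parity_def by (rule floor_parity_cases)

lemma rel_parity_add_axis:
  assumes "m \<noteq> 4"
  shows "rel_parity (v + axis i 1) m = (if i = m \<or> i = 4 then 1 - rel_parity v m else rel_parity v m)"
  using assms floor_parity_add_one[of "v $ m - v $ 4"] floor_parity_diff_one[of "v $ m - v $ 4"]
  unfolding rel_parity_def by (auto simp: axis_def algebra_simps)

lemma rel_parity_translate_Gamma:
  assumes "m \<noteq> 4" and "g \<in> Gamma"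
  shows "rel_parity (v + g) m = rel_parity v m"
proof -
  obtain a :: "5 \<Rightarrow> int" and n :: int where "a 4 = 0"
    and g: "g = (\<chi> m. 2 * of_int (a m)) + of_int n *\<^sub>R uvec"
    using \<open>g \<in> Gamma\<close> unfolding Gamma_def by blast
  then have "(v + g) $ m - (v + g) $ 4 = (v $ m - v $ 4) + 2 * of_int (a m)"
    by (simp add: uvec_def)
  then show ?thesis
    unfolding rel_parity_def by (simp only: floor_parity_add_even)
qed

lemma rel_parity_tau: "rel_parity (tau v) m = rel_parity v m"
  unfolding rel_parity_def tau_def uvec_def by simp

definition face_coord :: "5 \<Rightarrow> 5 \<Rightarrow> 5 option" where
  "face_coord j k =
     (if (j, k) = (0, 1) \<or> (j, k) = (0, 4) then Some 2
      else if (j, k) = (0, 3) then Some 1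
      else if (j, k) = (2, 3) then Some 0
      else if (j, k) = (1, 2) \<or> (j, k) = (1, 4) then Some 3
      else None)"

lemma face_coord_ne_4: "face_coord j k = Some m \<Longrightarrow> m \<noteq> 4"
  unfolding face_coord_def by (auto split: if_splits)

definition psi :: "cell2 \<Rightarrow> int" where
  "psi c = (case c of (v, j, k) \<Rightarrow>
     (case face_coord j k of None \<Rightarrow> 0 | Some m \<Rightarrow> rel_parity v m))"

lemma psi_step:
  "psi (v + axis i 1, j, k) - psi (v, j, k) =
     (case face_coord j k of None \<Rightarrow> 0
      | Some m \<Rightarrow> if i = m \<or> i = 4 then 1 - 2 * rel_parity v m else 0)"
  by (auto simp: psi_def rel_parity_add_axis dest: face_coord_ne_4 split: option.split)

lemma psi_translate_Gamma: "g \<in> Gamma \<Longrightarrow> psi (translate_cell g c) = psi c"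
  by (cases c) (auto simp: translate_cell_def psi_def rel_parity_translate_Gamma
      dest: face_coord_ne_4 split: option.split)

lemma psi_tau_cell: "psi (tau_cell c) = psi c"
  by (cases c) (simp add: tau_cell_def psi_def rel_parity_tau split: option.split)

lemma pairing_jailcell:
  "pairing \<psi> (jailcell (v, i, j, k)) =
     (\<psi> (v + axis i 1, j, k) - \<psi> (v, j, k)) - (\<psi> (v + axis j 1, i, k) - \<psi> (v, i, k))
     + (\<psi> (v + axis k 1, i, j) - \<psi> (v, i, j))"
  by (simp add: pairing_def jailcell_def)

lemma exhaust_5: "(x::5) = 0 \<or> x = 1 \<or> x = 2 \<or> x = 3 \<or> x = 4"
proof (induct x)
  case (of_int z)
  then have "z = 0 \<or> z = 1 \<or> z = 2 \<or> z = 3 \<or> z = 4"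
    by fastforce
  then show ?case
    by auto
qed

lemma increasing_triples_5:
  fixes i j k :: 5
  assumes "i < j" and "j < k"
  shows "(i, j, k) \<in> {(0,1,2), (0,1,3), (0,1,4), (0,2,3), (0,2,4), (0,3,4),
                      (1,2,3), (1,2,4), (1,3,4), (2,3,4)}"
  using assms exhaust_5[of i] exhaust_5[of j] exhaust_5[of k]
  by (elim disjE) (simp_all add: less_bit1_def bit1.Rep_numeral bit1.Rep_0 bit1.Rep_1)

lemma pairing_psi_jailcell:
  fixes i j k :: 5
  assumes "i < j" and "j < k"
  shows "pairing psi (jailcell (v, i, j, k)) \<in> {1, -1}"
proof -
  have unit: "1 - 2 * rel_parity v m \<in> {1, -1}" "-(1 - 2 * rel_parity v m) \<in> {1, -1}" for m
    using rel_parity_cases[of v m] by auto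
  show ?thesis
    using increasing_triples_5[OF assms] unit
    unfolding pairing_jailcell psi_step
    by (elim insertE emptyE) (simp_all add: face_coord_def)
qed

theorem propositionA5:
  shows "\<exists>\<psi>0 \<psi>1 :: cell2 \<Rightarrow> int.
     (\<forall>c\<in>cells0. \<forall>g\<in>Gamma. \<psi>0 (translate_cell g c) = \<psi>0 c) \<and>
     (\<forall>c\<in>cells1. \<forall>g\<in>Gamma. \<psi>1 (translate_cell g c) = \<psi>1 c) \<and>
     (\<forall>q\<in>cubes0. pairing \<psi>0 (jailcell q) \<in> {1, -1}) \<and>
     (\<forall>q\<in>cubes1. pairing \<psi>1 (jailcell q) \<in> {1, -1}) \<and>
     (\<forall>c\<in>cells0. \<psi>1 (tau_cell c) = \<psi>0 c)"
proof (intro exI[of _ psi] conjI ballI)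
  fix q assume "q \<in> cubes0"
  then obtain v i j k where "q = (v, i, j, k)" "i < j" "j < k"
    unfolding cubes0_def by auto
  then show "pairing psi (jailcell q) \<in> {1, -1}"
    using pairing_psi_jailcell by blast
next
  fix q assume "q \<in> cubes1"
  then obtain v i j k where "q = (tau v, i, j, k)" "i < j" "j < k"
    unfolding cubes1_def cubes0_def by auto
  then show "pairing psi (jailcell q) \<in> {1, -1}"
    using pairing_psi_jailcell by blast
qed (simp_all add: psi_translate_Gamma psi_tau_cell)

end
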